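(* In the random coefficients perturbed utility model described in the context, let the average structural function factor as in the context (so that $\overline{Y}(x,\beta)$ is defined) and let Assumption 2 hold. Assume $\beta_{k,1}=1$ almost surely (under $\nu$) for each $k\in\{1,\dots,K\}$. For each $k$ let $-\infty\le\underline{x}_{k,1}\le\overline{x}_{k,1}\le\infty$, and suppose $\overline{Y}(x)$ is identified (known) for all $x=(x_1',\dots,x_K')'$ satisfying $x_{k,1}\in[\underline{x}_{k,1},\overline{x}_{k,1}]$ for each $k$ and $x_{k,j}=0$ for all $j>1$. Then differences $V(u)-V(u')$ are identified for all $u,u'\in\times_{k=1}^K[\underline{x}_{k,1},\overline{x}_{k,1}]$. In particular, if $\underline{x}_{k,1}=-\infty$ and $\overline{x}_{k,1}=\infty$ for each $k$, then $V$ is identified up to an additive constant.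
   Context: Model. There are $K$ goods. For each good $k\in\{1,\dots,K\}$ there is a covariate vector $x_k=(x_{k,1},\dots,x_{k,d_k})'\in\mathbb{R}^{d_k}$ and a random coefficient vector $\beta_k=(\beta_{k,1},\dots,\beta_{k,d_k})'\in\mathbb{R}^{d_k}$; write $x=(x_1',\dots,x_K')'$ and $\beta=(\beta_1',\dots,\beta_K')'$. Let $\varepsilon$ be an unobservable of unrestricted dimension in a measurable space $E$, $B\subseteq\mathbb{R}^K$ a feasibility set and $D:B\times E\to\mathbb{R}\cup\{-\infty\}$ a disturbance. Choices satisfy $Y(x,\beta,\varepsilon)\in\arg\max_{y\in B}\sum_{k=1}^K y_k(\beta_k'x_k)+D(y,\varepsilon)$ (argmax nonempty). The average structural function is $\overline{Y}(x)=\int Y(x,\beta,\varepsilon)\,d\tau(\beta,\varepsilon)$, where $\tau=\nu\otimes\mu$ is a product of a probability measure $\nu$ over $\beta$ and a probability measure $\mu$ over $\varepsilon$ (slope–intercept independence), not depending on $x$, and $\overline{Y}(x)$ is finite. Define $\overline{Y}(x,\beta)=\int Y(x,\beta,\varepsilon)\,d\mu(\varepsilon)$, so $\overline{Y}(x)=\int\overline{Y}(x,\beta)\,d\nu(\beta)$. Let $\overline{B}$ be the convex hull of $B$ and $\overline{D}(y)=\sup\{\int D(\tilde Y(\varepsilon),\varepsilon)\,d\mu(\varepsilon):\tilde Y:E\to B\text{ measurable},\ \int\tilde Y\,d\mu=y\}$ ($\sup\emptyset=-\infty$). Assumption 2: (i) $\overline{Y}(x,\beta)$ equals (is the unique element of)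 $\arg\max_{y\in\overline{B}}\sum_k y_k(\beta_k'x_k)+\overline{D}(y)$; (ii) $\overline{B}$ is nonempty, closed, convex; (iii) $\overline{D}:\mathbb{R}^K\to\mathbb{R}\cup\{-\infty\}$ is concave, upper semicontinuous, finite at some $y\in\overline{B}$. Define the integrated indirect utility $V(u)=\max_{y\in\overline{B}}\sum_k y_ku_k+\overline{D}(y)$ for $u\in\mathbb{R}^K$. Identification: a quantity is identified if it is uniquely determined by the known values of $\overline{Y}$ on the stated region, i.e. all specifications satisfying the hypotheses and generating the same $\overline{Y}$ there yield the same value. *)

theory Defs
  imports "HOL-Analysis.Analysis" "HOL-Probability.Probability"
begin

text \<open>Goods are indexed by a finite type 'k (so K = CARD('k)).  The covariate
vector of good k is x k :: nat => real with components x k 0, ..., x k (d k - 1)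
(index 0 corresponds to the paper's index 1); similarly for beta.\<close>

definition idx :: "('k::finite \<Rightarrow> nat) \<Rightarrow> ('k \<Rightarrow> nat \<Rightarrow> real) \<Rightarrow> ('k \<Rightarrow> nat \<Rightarrow> real) \<Rightarrow> real^'k" where
  "idx d b x = (\<chi> k. \<Sum>j<d k. b k j * x k j)"

definition covariates :: "('k \<Rightarrow> nat) \<Rightarrow> ('k \<Rightarrow> nat \<Rightarrow> real) set" where
  "covariates d = {x. \<forall>k j. d k \<le> j \<longrightarrow> x k j = 0}"

definition is_choice :: "(real^'k) set \<Rightarrow> (real^'k \<Rightarrow> 'e \<Rightarrow> ereal) \<Rightarrow> real^'k \<Rightarrow> 'e \<Rightarrow> real^'k \<Rightarrow> bool" where
  "is_choice B D u e y \<longleftrightarrow> y \<in> B \<and> (\<forall>z\<in>B. ereal (z \<bullet> u) + D z e \<le> ereal (y \<bullet> u) + D y e)"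

text \<open>The random coefficients perturbed utility model, with slope-intercept
independence (tau = nu (x) mu), with a finite average structural function and with
Y(x,beta,.) mu-integrable for every x, beta (so that Ybar(x,beta) is defined).\<close>
definition rc_model ::
  "('k::finite \<Rightarrow> nat) \<Rightarrow> ('k \<Rightarrow> nat \<Rightarrow> real) measure \<Rightarrow> 'e measure \<Rightarrow> (real^'k) set
   \<Rightarrow> (real^'k \<Rightarrow> 'e \<Rightarrow> ereal) \<Rightarrow> (('k \<Rightarrow> nat \<Rightarrow> real) \<Rightarrow> ('k \<Rightarrow> nat \<Rightarrow> real) \<Rightarrow> 'e \<Rightarrow> real^'k) \<Rightarrow> bool" where
  "rc_model d nu mu B D Y \<longleftrightarrow>
     prob_space nu \<and> prob_space mu \<and> (\<forall>k. 1 \<le> d k) \<and>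
     (\<forall>y\<in>B. \<forall>e\<in>space mu. D y e \<noteq> \<infinity>) \<and>
     (\<forall>x\<in>covariates d. \<forall>b\<in>space nu. \<forall>e\<in>space mu. is_choice B D (idx d b x) e (Y x b e)) \<and>
     (\<forall>x\<in>covariates d. integrable (nu \<Otimes>\<^sub>M mu) (\<lambda>(b, e). Y x b e)) \<and>
     (\<forall>x\<in>covariates d. \<forall>b\<in>space nu. integrable mu (Y x b))"

definition asf :: "('b measure) \<Rightarrow> 'e measure \<Rightarrow> ('x \<Rightarrow> 'b \<Rightarrow> 'e \<Rightarrow> real^'k) \<Rightarrow> 'x \<Rightarrow> real^'k" where
  "asf nu mu Y x = (\<integral>be. Y x (fst be) (snd be) \<partial>(nu \<Otimes>\<^sub>M mu))"

definition asf_beta :: "'e measure \<Rightarrow> ('x \<Rightarrow> 'b \<Rightarrow> 'e \<Rightarrow> real^'k) \<Rightarrow> 'x \<Rightarrow> 'b \<Rightarrow> real^'k" where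
  "asf_beta mu Y x b = (\<integral>e. Y x b e \<partial>mu)"

text \<open>Integral of an extended-real valued function: positive part minus negative
part; it is taken to be -infinity when the negative part has infinite integral
(in particular when the integral is undefined, so such functions do not contribute
to a supremum).\<close>
definition ext_integral :: "'e measure \<Rightarrow> ('e \<Rightarrow> ereal) \<Rightarrow> ereal" where
  "ext_integral M f =
     (let p = (\<integral>\<^sup>+ e. e2ennreal (f e) \<partial>M); n = (\<integral>\<^sup>+ e. e2ennreal (- f e) \<partial>M)
      in if n = \<infinity> then - \<infinity> else enn2ereal p - enn2ereal n)"

text \<open>Integrated disturbance Dbar (sup of the empty set is -infinity).\<close>
definition Dbar :: "'e measure \<Rightarrow> (real^'k::finite) set \<Rightarrow> (real^'k \<Rightarrow> 'e \<Rightarrow> ereal) \<Rightarrow> real^'k \<Rightarrow> ereal" where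
  "Dbar mu B D y =
     (SUP Yt \<in> {Yt. Yt \<in> borel_measurable mu \<and> (\<forall>e\<in>space mu. Yt e \<in> B) \<and>
                  integrable mu Yt \<and> (\<integral>e. Yt e \<partial>mu) = y}.
        ext_integral mu (\<lambda>e. D (Yt e) e))"

definition argmax_on :: "'a set \<Rightarrow> ('a \<Rightarrow> ereal) \<Rightarrow> 'a set" where
  "argmax_on S g = {y\<in>S. \<forall>z\<in>S. g z \<le> g y}"

definition concave_ereal :: "('a::real_vector \<Rightarrow> ereal) \<Rightarrow> bool" where
  "concave_ereal f \<longleftrightarrow> (\<forall>y z. \<forall>t::real. 0 \<le> t \<and> t \<le> 1 \<longrightarrow>
      ereal t * f y + ereal (1 - t) * f z \<le> f (t *\<^sub>R y + (1 - t) *\<^sub>R z))"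

definition usc_ereal :: "('a::topological_space \<Rightarrow> ereal) \<Rightarrow> bool" where
  "usc_ereal f \<longleftrightarrow> (\<forall>y. Limsup (at y) f \<le> f y)"

definition assumption2 ::
  "('k::finite \<Rightarrow> nat) \<Rightarrow> ('k \<Rightarrow> nat \<Rightarrow> real) measure \<Rightarrow> 'e measure \<Rightarrow> (real^'k) set
   \<Rightarrow> (real^'k \<Rightarrow> 'e \<Rightarrow> ereal) \<Rightarrow> (('k \<Rightarrow> nat \<Rightarrow> real) \<Rightarrow> ('k \<Rightarrow> nat \<Rightarrow> real) \<Rightarrow> 'e \<Rightarrow> real^'k) \<Rightarrow> bool" where
  "assumption2 d nu mu B D Y \<longleftrightarrow>
     (\<forall>x\<in>covariates d. \<forall>b\<in>space nu.
        argmax_on (convex hull B) (\<lambda>y. ereal (y \<bullet> idx d b x) + Dbar mu B D y) = {asf_beta mu Y x b}) \<and>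
     convex hull B \<noteq> {} \<and> closed (convex hull B) \<and>
     (\<forall>y. Dbar mu B D y \<noteq> \<infinity>) \<and> concave_ereal (Dbar mu B D) \<and> usc_ereal (Dbar mu B D) \<and>
     (\<exists>y\<in>convex hull B. Dbar mu B D y \<noteq> - \<infinity>)"

definition Vind :: "'e measure \<Rightarrow> (real^'k::finite) set \<Rightarrow> (real^'k \<Rightarrow> 'e \<Rightarrow> ereal) \<Rightarrow> real^'k \<Rightarrow> ereal" where
  "Vind mu B D u = (SUP y \<in> convex hull B. ereal (y \<bullet> u) + Dbar mu B D y)"

end

theory Submission
  imports Defs
begin

text \<open>Since the first coefficient of every good is 1, all consumer types face the same index
u = (x_{1,1}, ..., x_{K,1}) when the other covariates vanish, so by Assumption 2 the average
structural function at such x is the unique maximiser of y \<bullet> u + Dbar y over the convex hull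
of B. By the envelope argument this maximiser is a subgradient of the convex function V at u.
Hence for two specifications with the same average structural function on the box, the two
functions V have a common subgradient s along the segment from u' to u, and therefore equal
increments along it: on a partition of the segment into n pieces both increments lie between the
lower and upper Riemann sums of s, whose gap telescopes to (s(1) - s(0)) / n.\<close>

lemma subgradient_telescoping_bounds:
  fixes f s :: "real \<Rightarrow> real" and n :: nat
  assumes sub: "\<And>t r. t \<in> {0..1} \<Longrightarrow> r \<in> {0..1} \<Longrightarrow> f t + s t * (r - t) \<le> f r"
    and n: "n > 0"
  shows "(\<Sum>i<n. s (i / n)) / n \<le> f 1 - f 0" and "f 1 - f 0 \<le> (\<Sum>i<n. s (Suc i / n)) / n"
proof -
  let ?t = "\<lambda>i. real i / real n"
  have t_in: "?t i \<in> {0..1}" if "i \<le> n" for i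
    using that n by auto
  have step: "?t (Suc i) - ?t i = 1 / n" for i
    using n by (simp add: field_simps)
  have telescope: "f 1 - f 0 = (\<Sum>i<n. f (?t (Suc i)) - f (?t i))"
    using sum_lessThan_telescope[of "\<lambda>i. f (?t i)" n] n by simp
  have "s (?t i) / n \<le> f (?t (Suc i)) - f (?t i)" if "i < n" for i
    using sub[of "?t i" "?t (Suc i)"] t_in[of i] t_in[of "Suc i"] that step[of i] by auto
  then have "(\<Sum>i<n. s (?t i) / n) \<le> f 1 - f 0"
    unfolding telescope by (intro sum_mono) auto
  then show "(\<Sum>i<n. s (i / n)) / n \<le> f 1 - f 0"
    by (simp add: sum_divide_distrib)
  have "f (?t (Suc i)) - f (?t i) \<le> s (?t (Suc i)) / n" if "i < n" for i
  proof -
    have "?t i - ?t (Suc i) = - (1 / n)"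
      using step[of i] by linarith
    then show ?thesis
      using sub[of "?t (Suc i)" "?t i"] t_in[of i] t_in[of "Suc i"] that by auto
  qed
  then have "f 1 - f 0 \<le> (\<Sum>i<n. s (?t (Suc i)) / n)"
    unfolding telescope by (intro sum_mono) auto
  then show "f 1 - f 0 \<le> (\<Sum>i<n. s (Suc i / n)) / n"
    by (simp add: sum_divide_distrib)
qed

lemma common_subgradient_same_increment:
  fixes f g s :: "real \<Rightarrow> real"
  assumes sub_f: "\<And>t r. t \<in> {0..1} \<Longrightarrow> r \<in> {0..1} \<Longrightarrow> f t + s t * (r - t) \<le> f r"
    and sub_g: "\<And>t r. t \<in> {0..1} \<Longrightarrow> r \<in> {0..1} \<Longrightarrow> g t + s t * (r - t) \<le> g r"
  shows "f 1 - f 0 = g 1 - g 0"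
proof (rule ccontr)
  define \<delta> where "\<delta> = \<bar>(f 1 - f 0) - (g 1 - g 0)\<bar>"
  assume "f 1 - f 0 \<noteq> g 1 - g 0"
  then have "\<delta> > 0"
    by (simp add: \<delta>_def)
  then obtain n :: nat where n: "s 1 - s 0 < n * \<delta>"
    using reals_Archimedean3 by blast
  have "n > 0"
    using n sub_f[of 0 1] sub_f[of 1 0] by (cases n) (auto simp: algebra_simps)
  have "(\<Sum>i<n. s (Suc i / n)) - (\<Sum>i<n. s (i / n)) = s 1 - s 0"
    using sum_lessThan_telescope[of "\<lambda>i. s (real i / real n)" n] \<open>n > 0\<close>
    by (simp add: sum_subtractf[symmetric])
  then have "(\<Sum>i<n. s (Suc i / n)) / n - (\<Sum>i<n. s (i / n)) / n = (s 1 - s 0) / n"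
    by (metis diff_divide_distrib)
  then have "\<delta> \<le> (s 1 - s 0) / n"
    using subgradient_telescoping_bounds[OF sub_f \<open>n > 0\<close>]
      subgradient_telescoping_bounds[OF sub_g \<open>n > 0\<close>]
    unfolding \<delta>_def by linarith
  with n \<open>n > 0\<close> show False
    by (simp add: le_divide_eq mult.commute)
qed

lemma common_subgradient_same_difference:
  fixes f g :: "'a::real_inner \<Rightarrow> real" and G :: "'a \<Rightarrow> 'a"
  assumes sub_f: "\<And>w w'. w \<in> closed_segment a b \<Longrightarrow> w' \<in> closed_segment a b \<Longrightarrow>
      f w + G w \<bullet> (w' - w) \<le> f w'"
    and sub_g: "\<And>w w'. w \<in> closed_segment a b \<Longrightarrow> w' \<in> closed_segment a b \<Longrightarrow>
      g w + G w \<bullet> (w' - w) \<le> g w'"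
  shows "f b - f a = g b - g a"
proof -
  define p where "p t = (1 - t) *\<^sub>R a + t *\<^sub>R b" for t
  have p_in: "p t \<in> closed_segment a b" if "t \<in> {0..1}" for t
    using that unfolding p_def in_segment by auto
  have p_diff: "p r - p t = (r - t) *\<^sub>R (b - a)" for r t
    unfolding p_def by (simp add: algebra_simps)
  have "(f \<circ> p) 1 - (f \<circ> p) 0 = (g \<circ> p) 1 - (g \<circ> p) 0"
  proof (rule common_subgradient_same_increment[where s = "\<lambda>t. G (p t) \<bullet> (b - a)"])
    fix t r :: real assume "t \<in> {0..1}" "r \<in> {0..1}"
    then show "(f \<circ> p) t + G (p t) \<bullet> (b - a) * (r - t) \<le> (f \<circ> p) r"
      and "(g \<circ> p) t + G (p t) \<bullet> (b - a) * (r - t) \<le> (g \<circ> p) r"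
      using sub_f[OF p_in p_in] sub_g[OF p_in p_in] by (simp_all add: p_diff mult.commute)
  qed
  then show ?thesis
    by (simp add: p_def)
qed

lemma closed_segment_in_ereal_box:
  fixes lo hi :: "'k::finite \<Rightarrow> ereal" and a b w :: "real^'k"
  assumes a: "\<forall>k. ereal (a $ k) \<in> {lo k..hi k}" and b: "\<forall>k. ereal (b $ k) \<in> {lo k..hi k}"
    and w: "w \<in> closed_segment a b"
  shows "ereal (w $ k) \<in> {lo k..hi k}"
proof -
  obtain t where t: "0 \<le> t" "t \<le> 1" and w_eq: "w $ k = (1 - t) * a $ k + t * b $ k"
    using w unfolding in_segment by auto
  have "(1 - t) * min (a $ k) (b $ k) + t * min (a $ k) (b $ k) \<le> w $ k"
    unfolding w_eq using t by (intro add_mono mult_left_mono) auto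
  moreover have "w $ k \<le> max (a $ k) (b $ k)"
    unfolding w_eq using t by (intro convex_bound_le) auto
  ultimately have "min (ereal (a $ k)) (ereal (b $ k)) \<le> ereal (w $ k)"
    and "ereal (w $ k) \<le> max (ereal (a $ k)) (ereal (b $ k))"
    by (simp_all add: algebra_simps min_le_iff_disj le_max_iff_disj)
  moreover have "lo k \<le> min (ereal (a $ k)) (ereal (b $ k))"
    and "max (ereal (a $ k)) (ereal (b $ k)) \<le> hi k"
    using a b by simp_all
  ultimately show ?thesis
    unfolding atLeastAtMost_iff by (meson order.trans)
qed

definition lead_covariates :: "real^'k \<Rightarrow> ('k \<Rightarrow> nat \<Rightarrow> real)" where
  "lead_covariates w = (\<lambda>k j. if j = 0 then w $ k else 0)"

lemma lead_covariates_in_covariates: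
  fixes d :: "'k::finite \<Rightarrow> nat"
  shows "\<forall>k. 1 \<le> d k \<Longrightarrow> lead_covariates w \<in> covariates d"
  unfolding covariates_def lead_covariates_def by (auto dest: order_trans)

lemma idx_lead_covariates:
  fixes d :: "'k::finite \<Rightarrow> nat"
  shows "\<forall>k. 1 \<le> d k \<Longrightarrow> \<forall>k. b k 0 = 1 \<Longrightarrow> idx d b (lead_covariates w) = w"
  unfolding idx_def lead_covariates_def by (simp add: vec_eq_iff if_distrib Suc_le_eq cong: if_cong)

lemma SUP_argmax_on:
  "g \<in> argmax_on S f \<Longrightarrow> (SUP y\<in>S. f y) = f g"
  unfolding argmax_on_def by (auto intro: antisym SUP_upper SUP_least)

lemma argmax_on_is_subgradient_of_SUP:
  fixes D :: "'a::real_inner \<Rightarrow> ereal"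
  assumes "g \<in> argmax_on S (\<lambda>y. ereal (y \<bullet> u) + D y)"
  shows "(SUP y\<in>S. ereal (y \<bullet> u) + D y) + ereal (g \<bullet> (u' - u))
      \<le> (SUP y\<in>S. ereal (y \<bullet> u') + D y)"
proof -
  have "g \<in> S"
    using assms unfolding argmax_on_def by auto
  have "(SUP y\<in>S. ereal (y \<bullet> u) + D y) + ereal (g \<bullet> (u' - u)) = ereal (g \<bullet> u') + D g"
    unfolding SUP_argmax_on[OF assms] by (cases "D g") (simp_all add: inner_diff_right)
  also have "\<dots> \<le> (SUP y\<in>S. ereal (y \<bullet> u') + D y)"
    using \<open>g \<in> S\<close> by (rule SUP_upper)
  finally show ?thesis .
qed

lemma asf_eq_if_AE_asf_beta_eq:
  assumes model: "rc_model d nu mu B D Y" and x: "x \<in> covariates d"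
    and const: "AE b in nu. asf_beta mu Y x b = g"
  shows "asf nu mu Y x = g"
proof -
  have nu: "prob_space nu" and mu: "prob_space mu"
    and Y_int: "integrable (nu \<Otimes>\<^sub>M mu) (\<lambda>be. Y x (fst be) (snd be))"
    using model x unfolding rc_model_def by (auto simp: case_prod_beta')
  interpret pair_sigma_finite nu mu
    unfolding pair_sigma_finite_def
    using nu mu by (auto intro: prob_space_imp_sigma_finite)
  have "asf nu mu Y x = (\<integral>b. asf_beta mu Y x b \<partial>nu)"
    unfolding asf_def asf_beta_def using integral_fst'[OF Y_int] by simp
  also have "\<dots> = (\<integral>b. g \<partial>nu)"
    using integrable_fst'[OF Y_int] const
    by (intro integral_cong_AE) (auto simp: asf_beta_def)
  also have "\<dots> = g"
    using prob_space.prob_space[OF nu] by simp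
  finally show ?thesis .
qed

lemma asf_lead_covariates_argmax:
  assumes model: "rc_model d nu mu B D Y" and A2: "assumption2 d nu mu B D Y"
    and unit: "AE b in nu. \<forall>k. b k 0 = 1"
  shows "argmax_on (convex hull B) (\<lambda>y. ereal (y \<bullet> w) + Dbar mu B D y)
      = {asf nu mu Y (lead_covariates w)}"
    (is "argmax_on _ ?f = _")
proof -
  have nu: "prob_space nu" and d: "\<forall>k. 1 \<le> d k"
    using model unfolding rc_model_def by auto
  have x: "lead_covariates w \<in> covariates d"
    using d by (rule lead_covariates_in_covariates)
  have argmax_beta: "argmax_on (convex hull B) ?f = {asf_beta mu Y (lead_covariates w) b}"
    if "b \<in> space nu" "\<forall>k. b k 0 = 1" for b
  proof -
    have "argmax_on (convex hull B) (\<lambda>y. ereal (y \<bullet> idx d b (lead_covariates w)) + Dbar mu B D y)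
        = {asf_beta mu Y (lead_covariates w) b}"
      using A2 x that(1) unfolding assumption2_def by blast
    then show ?thesis
      using idx_lead_covariates[where b = b and w = w, OF d that(2)] by simp
  qed
  have "AE b in nu. \<exists>b'\<in>space nu. \<forall>k. b' k 0 = 1"
    using unit AE_space by eventually_elim auto
  then have "\<exists>b\<in>space nu. \<forall>k. b k 0 = 1"
    by (simp add: prob_space.AE_const[OF nu])
  then obtain b0 where b0: "b0 \<in> space nu" "\<forall>k. b0 k 0 = 1"
    by blast
  define g where "g = asf_beta mu Y (lead_covariates w) b0"
  have "AE b in nu. asf_beta mu Y (lead_covariates w) b = g"
    using unit AE_space
  proof eventually_elim
    case (elim b)
    then show ?case
      using argmax_beta[of b] argmax_beta[OF b0] unfolding g_def by simp
  qed
  then have "asf nu mu Y (lead_covariates w) = g"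
    by (rule asf_eq_if_AE_asf_beta_eq[OF model x])
  then show ?thesis
    using argmax_beta[OF b0] unfolding g_def by simp
qed

lemma Vind_finite:
  assumes model: "rc_model d nu mu B D Y" and A2: "assumption2 d nu mu B D Y"
    and unit: "AE b in nu. \<forall>k. b k 0 = 1"
  shows "\<bar>Vind mu B D w\<bar> \<noteq> \<infinity>"
proof -
  define g where "g = asf nu mu Y (lead_covariates w)"
  have g: "g \<in> argmax_on (convex hull B) (\<lambda>y. ereal (y \<bullet> w) + Dbar mu B D y)"
    using asf_lead_covariates_argmax[OF model A2 unit] unfolding g_def by simp
  obtain y0 where y0: "y0 \<in> convex hull B" "Dbar mu B D y0 \<noteq> -\<infinity>"
    using A2 unfolding assumption2_def by blast
  have "ereal (y0 \<bullet> w) + Dbar mu B D y0 \<le> ereal (g \<bullet> w) + Dbar mu B D g"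
    using g y0(1) unfolding argmax_on_def by blast
  then have "Dbar mu B D g \<noteq> -\<infinity>"
    using y0(2) A2 unfolding assumption2_def by auto
  moreover have "Dbar mu B D g \<noteq> \<infinity>"
    using A2 unfolding assumption2_def by blast
  ultimately show ?thesis
    unfolding Vind_def SUP_argmax_on[OF g] by (cases "Dbar mu B D g") auto
qed

lemma Vind_subgradient:
  assumes model: "rc_model d nu mu B D Y" and A2: "assumption2 d nu mu B D Y"
    and unit: "AE b in nu. \<forall>k. b k 0 = 1"
  shows "Vind mu B D w + ereal (asf nu mu Y (lead_covariates w) \<bullet> (w' - w))
      \<le> Vind mu B D w'"
  unfolding Vind_def
  using asf_lead_covariates_argmax[OF model A2 unit] by (intro argmax_on_is_subgradient_of_SUP) simp

theorem proposition2:
  fixes d :: "'k::finite \<Rightarrow> nat"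
    and xlo xhi :: "'k \<Rightarrow> ereal"
    and nu1 :: "('k \<Rightarrow> nat \<Rightarrow> real) measure" and mu1 :: "'e measure"
    and B1 :: "(real^'k) set" and D1 :: "real^'k \<Rightarrow> 'e \<Rightarrow> ereal"
    and Y1 :: "('k \<Rightarrow> nat \<Rightarrow> real) \<Rightarrow> ('k \<Rightarrow> nat \<Rightarrow> real) \<Rightarrow> 'e \<Rightarrow> real^'k"
    and nu2 :: "('k \<Rightarrow> nat \<Rightarrow> real) measure" and mu2 :: "'f measure"
    and B2 :: "(real^'k) set" and D2 :: "real^'k \<Rightarrow> 'f \<Rightarrow> ereal"
    and Y2 :: "('k \<Rightarrow> nat \<Rightarrow> real) \<Rightarrow> ('k \<Rightarrow> nat \<Rightarrow> real) \<Rightarrow> 'f \<Rightarrow> real^'k"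
    and u u' :: "real^'k"
  assumes model1: "rc_model d nu1 mu1 B1 D1 Y1" and A2_1: "assumption2 d nu1 mu1 B1 D1 Y1"
    and unit1: "AE b in nu1. \<forall>k. b k 0 = 1"
    and model2: "rc_model d nu2 mu2 B2 D2 Y2" and A2_2: "assumption2 d nu2 mu2 B2 D2 Y2"
    and unit2: "AE b in nu2. \<forall>k. b k 0 = 1"
    and bounds: "\<forall>k. xlo k \<le> xhi k"
    and same_asf: "\<forall>x\<in>covariates d.
          (\<forall>k. ereal (x k 0) \<in> {xlo k..xhi k} \<and> (\<forall>j>0. x k j = 0)) \<longrightarrow>
          asf nu1 mu1 Y1 x = asf nu2 mu2 Y2 x"
    and u_box: "\<forall>k. ereal (u $ k) \<in> {xlo k..xhi k}"
    and u'_box: "\<forall>k. ereal (u' $ k) \<in> {xlo k..xhi k}"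
  shows "Vind mu1 B1 D1 u - Vind mu1 B1 D1 u' = Vind mu2 B2 D2 u - Vind mu2 B2 D2 u'"
proof -
  define V1 where "V1 w = real_of_ereal (Vind mu1 B1 D1 w)" for w
  define V2 where "V2 w = real_of_ereal (Vind mu2 B2 D2 w)" for w
  define G where "G w = asf nu1 mu1 Y1 (lead_covariates w)" for w
  have V1: "Vind mu1 B1 D1 w = ereal (V1 w)" for w
    using Vind_finite[OF model1 A2_1 unit1] unfolding V1_def by (simp add: ereal_real')
  have V2: "Vind mu2 B2 D2 w = ereal (V2 w)" for w
    using Vind_finite[OF model2 A2_2 unit2] unfolding V2_def by (simp add: ereal_real')
  have same_G: "asf nu2 mu2 Y2 (lead_covariates w) = G w" if "w \<in> closed_segment u' u" for w
  proof -
    have "lead_covariates w \<in> covariates d"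
      using model1 unfolding rc_model_def by (auto intro: lead_covariates_in_covariates)
    moreover have "ereal (w $ k) \<in> {xlo k..xhi k}" for k
      using u'_box u_box that by (rule closed_segment_in_ereal_box)
    ultimately show ?thesis
      using same_asf unfolding G_def by (simp add: lead_covariates_def)
  qed
  have "V1 u - V1 u' = V2 u - V2 u'"
  proof (rule common_subgradient_same_difference[where G = G])
    fix w w' assume w: "w \<in> closed_segment u' u"
    show "V1 w + G w \<bullet> (w' - w) \<le> V1 w'"
      using Vind_subgradient[OF model1 A2_1 unit1, of w w'] unfolding V1 G_def by simp
    show "V2 w + G w \<bullet> (w' - w) \<le> V2 w'"
      using Vind_subgradient[OF model2 A2_2 unit2, of w w'] unfolding V2 same_G[OF w] by simp
  qed
  then show ?thesis
    unfolding V1 V2 by simp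
qed

end
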